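(* Let $(V_4,g)$ be a space-time whose Ricci tensor $R$ is of non-null electromagnetic type and whose Weyl tensor $W$ is of Petrov–Bel type D. Then $R$ and $W$ have aligned (i.e. coinciding) principal planes if and only if $$a\neq0,\qquad R^{\mu}{}_{(\lambda}\mathcal P_{\nu)\mu\gamma\delta}=0,\qquad \mathcal P\equiv\mathcal W+\frac ba\mathcal G,$$ where $\mathcal W=\frac12(W-i*W)$ is the self-dual Weyl tensor, $a=\mathrm{Tr}\mathcal W^2$, $b=\mathrm{Tr}\mathcal W^3$.
   Context: Signature $(-,+,+,+)$; curvature conventions as in Kramer et al. Round brackets on indices denote symmetrization. For double 2-forms, $(P\circ Q)^{\alpha\beta}{}_{\rho\sigma}=\frac12P^{\alpha\beta}{}_{\mu\nu}Q^{\mu\nu}{}_{\rho\sigma}$, $P^2=P\circ P$, $\mathrm{Tr}P=\frac12P^{\alpha\beta}{}_{\alpha\beta}$; $*W=\eta\circ W$ with $\eta$ the volume element; $G=\frac12g\wedge g$ with $(A\wedge B)_{\alpha\beta\mu\nu}=A_{\alpha\mu}B_{\beta\nu}+A_{\beta\nu}B_{\alpha\mu}-A_{\alpha\nu}B_{\beta\mu}-A_{\beta\mu}B_{\alpha\nu}$; $\mathcal G=\frac12(G-i\eta)$. $R$ is of non-null electromagnetic type if $R=-\kappa\Pi$ where $\kappa>0$ and $\Pi=v-h$, with $v=U^2$, $h=-( *U)^2$ for a simple unit 2-form $U$ (equivalently $\mathrm{tr}R=0$, $4R^2=(\mathrm{tr}R^2)g\neq0$, $R(x,x)>0$ for time-like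 $x$); its principal planes are the time-like plane $V$ with volume element $U$ and its orthogonal complement $H$. $W$ is of Petrov–Bel type D if $\mathcal W=3\rho\,\mathcal U\otimes\mathcal U+\rho\mathcal G$ with $\rho=-b/a$ and $\mathcal U=\frac1{\sqrt2}(U'-i*U')$ a normalized self-dual bivector ($U'$ a simple unit 2-form); its principal planes are the time-like plane with volume element $U'$ and its orthogonal complement. *)

theory Defs
  imports Complex_Main
begin

text \<open>Pointwise (tangent space at a point) tensor algebra in components with respect to an
arbitrary coordinate basis; all indices range over 0..3 and tensors are stored with all
indices down.\<close>

type_synonym vec = "nat \<Rightarrow> real"
type_synonym tens2 = "nat \<Rightarrow> nat \<Rightarrow> real"
type_synonym 'a tens4 = "nat \<Rightarrow> nat \<Rightarrow> nat \<Rightarrow> nat \<Rightarrow> 'a"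

abbreviation idx :: "nat set" where "idx \<equiv> {..<4}"

text \<open>Levi-Civita symbol with eps 0 1 2 3 = 1.\<close>
definition levi :: "nat \<Rightarrow> nat \<Rightarrow> nat \<Rightarrow> nat \<Rightarrow> real" where
  "levi a b c d = (let xs = [int a, int b, int c, int d] in
     (\<Prod>p \<in> {(i,j). i < j \<and> j < (4::nat)}. real_of_int (sgn (xs ! snd p - xs ! fst p))))"

definition det4 :: "tens2 \<Rightarrow> real" where
  "det4 g = (\<Sum>a\<in>idx. \<Sum>b\<in>idx. \<Sum>c\<in>idx. \<Sum>d\<in>idx.
               levi a b c d * g 0 a * g 1 b * g 2 c * g 3 d)"

definition minkowski :: "nat \<Rightarrow> nat \<Rightarrow> real" where
  "minkowski a b = (if a \<noteq> b then 0 else if a = 0 then -1 else 1)"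

definition lorentzian :: "tens2 \<Rightarrow> bool" where
  "lorentzian g \<longleftrightarrow> (\<forall>i<4. \<forall>j<4. g i j = g j i) \<and>
     (\<exists>e :: nat \<Rightarrow> nat \<Rightarrow> real. \<forall>a<4. \<forall>b<4.
        (\<Sum>\<mu>\<in>idx. \<Sum>\<nu>\<in>idx. g \<mu> \<nu> * e a \<mu> * e b \<nu>) = minkowski a b)"

definition ginv :: "tens2 \<Rightarrow> tens2" where
  "ginv g = (SOME h. \<forall>i<4. \<forall>k<4. (\<Sum>j\<in>idx. h i j * g j k) = (if i = k then 1 else 0))"

definition vol :: "tens2 \<Rightarrow> real tens4" where
  "vol g a b c d = sqrt (- det4 g) * levi a b c d"

definition ip :: "tens2 \<Rightarrow> vec \<Rightarrow> vec \<Rightarrow> real" where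
  "ip g x y = (\<Sum>\<mu>\<in>idx. \<Sum>\<nu>\<in>idx. g \<mu> \<nu> * x \<mu> * y \<nu>)"

definition lower :: "tens2 \<Rightarrow> vec \<Rightarrow> vec" where
  "lower g x a = (\<Sum>\<mu>\<in>idx. g a \<mu> * x \<mu>)"

definition wedge1 :: "vec \<Rightarrow> vec \<Rightarrow> tens2" where
  "wedge1 x y a b = x a * y b - y a * x b"

definition timelike_volume_form :: "tens2 \<Rightarrow> tens2 \<Rightarrow> vec \<Rightarrow> vec \<Rightarrow> bool" where
  "timelike_volume_form g U x y \<longleftrightarrow>
     ip g x x = -1 \<and> ip g y y = 1 \<and> ip g x y = 0 \<and>
     (\<forall>a<4. \<forall>b<4. U a b = wedge1 (lower g x) (lower g y) a b)"

definition in_plane :: "vec \<Rightarrow> vec \<Rightarrow> vec \<Rightarrow> bool" where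
  "in_plane x y v \<longleftrightarrow> (\<exists>s t. \<forall>i<4. v i = s * x i + t * y i)"

definition hodge2 :: "tens2 \<Rightarrow> tens2 \<Rightarrow> tens2" where
  "hodge2 g U a b = (1/2) * (\<Sum>k\<in>idx. \<Sum>l\<in>idx. \<Sum>m\<in>idx. \<Sum>n\<in>idx.
      vol g a b k l * ginv g k m * ginv g l n * U m n)"

definition sq2 :: "tens2 \<Rightarrow> tens2 \<Rightarrow> tens2" where
  "sq2 g U a b = (\<Sum>m\<in>idx. \<Sum>n\<in>idx. U a m * ginv g m n * U n b)"

text \<open>R = -kappa Pi, Pi = v - h, v = U^2, h = -( *U)^2, U time-like simple unit 2-form
with U = x /\ y.\<close>
definition nonnull_em :: "tens2 \<Rightarrow> tens2 \<Rightarrow> real \<Rightarrow> tens2 \<Rightarrow> vec \<Rightarrow> vec \<Rightarrow> bool" where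
  "nonnull_em g R \<kappa> U x y \<longleftrightarrow> 0 < \<kappa> \<and> timelike_volume_form g U x y \<and>
     (\<forall>a<4. \<forall>b<4. R a b = - \<kappa> * (sq2 g U a b - (- sq2 g (hodge2 g U) a b)))"

definition cplx :: "real tens4 \<Rightarrow> complex tens4" where
  "cplx T a b c d = complex_of_real (T a b c d)"

definition comp :: "tens2 \<Rightarrow> complex tens4 \<Rightarrow> complex tens4 \<Rightarrow> complex tens4" where
  "comp g P Q a b r s = (1/2) * (\<Sum>k\<in>idx. \<Sum>l\<in>idx. \<Sum>m\<in>idx. \<Sum>n\<in>idx.
      P a b k l * complex_of_real (ginv g k m * ginv g l n) * Q m n r s)"

definition trace4 :: "tens2 \<Rightarrow> complex tens4 \<Rightarrow> complex" where
  "trace4 g P = (1/2) * (\<Sum>a\<in>idx. \<Sum>b\<in>idx. \<Sum>m\<in>idx. \<Sum>n\<in>idx.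
      complex_of_real (ginv g a m * ginv g b n) * P m n a b)"

text \<open>G = 1/2 g /\ g, i.e. G_{abmn} = g_{am} g_{bn} - g_{an} g_{bm}.\<close>
definition Gt :: "tens2 \<Rightarrow> real tens4" where
  "Gt g a b m n = g a m * g b n - g a n * g b m"

definition calG :: "tens2 \<Rightarrow> complex tens4" where
  "calG g a b c d = (1/2) * (cplx (Gt g) a b c d - \<i> * cplx (vol g) a b c d)"

definition dual4 :: "tens2 \<Rightarrow> real tens4 \<Rightarrow> complex tens4" where
  "dual4 g W = comp g (cplx (vol g)) (cplx W)"

definition sdW :: "tens2 \<Rightarrow> real tens4 \<Rightarrow> complex tens4" where
  "sdW g W a b c d = (1/2) * (cplx W a b c d - \<i> * dual4 g W a b c d)"

definition inv_a :: "tens2 \<Rightarrow> real tens4 \<Rightarrow> complex" where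
  "inv_a g W = trace4 g (comp g (sdW g W) (sdW g W))"

definition inv_b :: "tens2 \<Rightarrow> real tens4 \<Rightarrow> complex" where
  "inv_b g W = trace4 g (comp g (sdW g W) (comp g (sdW g W) (sdW g W)))"

definition weyl_tensor :: "tens2 \<Rightarrow> real tens4 \<Rightarrow> bool" where
  "weyl_tensor g W \<longleftrightarrow> (\<forall>a<4. \<forall>b<4. \<forall>c<4. \<forall>d<4.
      W a b c d = - W b a c d \<and> W a b c d = - W a b d c \<and> W a b c d = W c d a b \<and>
      W a b c d + W a c d b + W a d b c = 0) \<and>
    (\<forall>b<4. \<forall>d<4. (\<Sum>a\<in>idx. \<Sum>c\<in>idx. ginv g a c * W a b c d) = 0)"

definition typeD :: "tens2 \<Rightarrow> real tens4 \<Rightarrow> complex \<Rightarrow> tens2 \<Rightarrow> vec \<Rightarrow> vec \<Rightarrow> bool" where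
  "typeD g W \<rho> U' x' y' \<longleftrightarrow> timelike_volume_form g U' x' y' \<and>
     inv_a g W \<noteq> 0 \<and> \<rho> = - inv_b g W / inv_a g W \<and>
     (let cU = (\<lambda>a b. (complex_of_real (U' a b) - \<i> * complex_of_real (hodge2 g U' a b))
                      / complex_of_real (sqrt 2)) in
      \<forall>a<4. \<forall>b<4. \<forall>c<4. \<forall>d<4.
        sdW g W a b c d = 3 * \<rho> * cU a b * cU c d + \<rho> * calG g a b c d)"

end

theory Submission
  imports Defs "Jordan_Normal_Form.Determinant"
begin

text \<open>
  With \<open>\<rho> = -b/a\<close> the tensor \<open>P\<close> equals \<open>3\<rho> B\<otimes>B\<close> for the self-dual bivector
  \<open>B = (U' - i*U')/sqrt 2\<close> of the Weyl tensor, so the concomitant vanishes iff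
  \<open>R^m_(l F_n)m = 0\<close> for \<open>F = U'\<close> and \<open>F = *U'\<close>, i.e. iff both 2-forms commute with \<open>R\<close>
  viewed as an endomorphism.  The non-null Ricci tensor \<open>R = -\<kappa>(U\<^sup>2 + (*U)\<^sup>2)\<close> acts as
  \<open>-\<kappa>\<close> on the plane spanned by the orthonormal pair \<open>x, y\<close> and as \<open>+\<kappa>\<close> on its orthogonal
  complement, so \<open>U\<close> and \<open>*U\<close>, and hence all their multiples, commute with \<open>R\<close>.  Conversely,
  if \<open>U' = x'\<and>y'\<close> commutes with \<open>R\<close>, then \<open>x'\<close> and \<open>y'\<close> are eigenvectors of \<open>R\<close> with a common
  eigenvalue.  Vectors orthogonal to the timelike \<open>x\<close> are spacelike, so the timelike \<open>x'\<close>
  forces this eigenvalue to be \<open>-\<kappa>\<close>, and the \<open>-\<kappa>\<close>-eigenvectors of \<open>R\<close> are exactly the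
  vectors of the plane of \<open>x\<close> and \<open>y\<close>.
\<close>

lemma sum_idx_expand: "(\<Sum>i\<in>idx. f i) = f 0 + f 1 + f 2 + f (3::nat)"
  by (simp add: lessThan_nat_numeral eval_nat_numeral add.commute add.left_commute)

lemma sum_delta_right:
  fixes f :: "'b \<Rightarrow> 'a::comm_semiring_1"
  shows "finite A \<Longrightarrow> k \<in> A \<Longrightarrow> (\<Sum>j\<in>A. f j * (if j = k then 1 else 0)) = f k"
  by (simp add: if_distrib cong: if_cong)

lemma sum_delta_left:
  fixes f :: "'b \<Rightarrow> 'a::comm_semiring_1"
  shows "finite A \<Longrightarrow> k \<in> A \<Longrightarrow> (\<Sum>j\<in>A. (if k = j then 1 else 0) * f j) = f k"
  using sum_delta_right[of A k f] by (simp add: mult.commute eq_commute)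

lemma sum_swap3:
  "(\<Sum>k\<in>A. \<Sum>m\<in>B. \<Sum>n\<in>C. F k m n) = (\<Sum>m\<in>B. \<Sum>n\<in>C. \<Sum>k\<in>A. (F k m n :: 'a::comm_monoid_add))"
  by (subst sum.swap) (simp only: sum.swap[of _ A])

lemma sum_swap4:
  "(\<Sum>\<mu>\<in>S. \<Sum>\<nu>\<in>T. \<Sum>a\<in>A. \<Sum>b\<in>B. F \<mu> \<nu> a b)
     = (\<Sum>a\<in>A. \<Sum>b\<in>B. \<Sum>\<mu>\<in>S. \<Sum>\<nu>\<in>T. (F \<mu> \<nu> a b :: 'a::comm_monoid_add))"
  by (simp only: sum_swap3[of _ T] sum_swap3[of _ S])

lemma sum_antisym_quadratic:
  assumes "\<And>a k. f a k = - f k a"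
  shows "(\<Sum>a\<in>A. \<Sum>k\<in>A. f a k * x a * x k) = (0::real)"
proof -
  have "(\<Sum>a\<in>A. \<Sum>k\<in>A. f a k * x a * x k) = (\<Sum>k\<in>A. \<Sum>a\<in>A. - (f k a * x k * x a))"
    by (subst sum.swap) (intro sum.cong refl, subst assms, simp add: mult_ac)
  then show ?thesis by (simp add: sum_negf)
qed

lemma sum_antisym_bilinear:
  fixes A :: "'b \<Rightarrow> 'b \<Rightarrow> 'a::comm_ring"
  assumes "\<And>k m. A k m = - A m k"
  shows "(\<Sum>m\<in>I. (\<Sum>k\<in>I. a k * A k m) * b m) + (\<Sum>m\<in>I. (\<Sum>k\<in>I. b k * A k m) * a m) = 0"
proof -
  have "(\<Sum>m\<in>I. (\<Sum>k\<in>I. b k * A k m) * a m) = (\<Sum>k\<in>I. \<Sum>m\<in>I. - (a m * A m k * b k))"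
    by (simp only: sum_distrib_right, subst sum.swap) (intro sum.cong refl, subst assms, simp add: mult_ac)
  also have "\<dots> = - (\<Sum>m\<in>I. (\<Sum>k\<in>I. a k * A k m) * b m)"
    by (simp add: sum_negf sum_distrib_right)
  finally show ?thesis by simp
qed

section \<open>The inverse metric and the causal character of vectors\<close>

lemma square_right_inverse_imp_left_inverse:
  fixes A B :: "nat \<Rightarrow> nat \<Rightarrow> 'a::field"
  assumes "\<forall>i<n. \<forall>k<n. (\<Sum>j<n. A i j * B j k) = (if i = k then 1 else 0)"
  shows "\<forall>i<n. \<forall>k<n. (\<Sum>j<n. B i j * A j k) = (if i = k then 1 else 0)"
proof -
  let ?A = "mat n n (\<lambda>(i,j). A i j)" and ?B = "mat n n (\<lambda>(i,j). B i j)"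
  have "?A * ?B = 1\<^sub>m n"
    by (rule eq_matI) (auto simp: scalar_prod_def atLeast0LessThan assms)
  then have BA: "?B * ?A = 1\<^sub>m n"
    by (rule mat_mult_left_right_inverse[rotated 2]) auto
  show ?thesis
  proof (intro allI impI)
    fix i k assume "i < n" "k < n"
    with BA have "(?B * ?A) $$ (i,k) = 1\<^sub>m n $$ (i,k)" by simp
    with \<open>i < n\<close> \<open>k < n\<close> show "(\<Sum>j<n. B i j * A j k) = (if i = k then 1 else 0)"
      by (simp add: scalar_prod_def atLeast0LessThan)
  qed
qed

lemma lorentzian_orthonormal_frame:
  assumes "lorentzian g"
  obtains e where "\<forall>a<4. \<forall>b<4. (\<Sum>\<mu>\<in>idx. \<Sum>\<nu>\<in>idx. g \<mu> \<nu> * e a \<mu> * e b \<nu>) = minkowski a b"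
    and "\<forall>i<4. \<forall>k<4. (\<Sum>j\<in>idx. e j i * (minkowski j j * (\<Sum>l\<in>idx. e j l * g l k)))
                        = (if i = k then 1 else 0)"
proof -
  from assms obtain e where e: "\<forall>a<4. \<forall>b<4. (\<Sum>\<mu>\<in>idx. \<Sum>\<nu>\<in>idx. g \<mu> \<nu> * e a \<mu> * e b \<nu>) = minkowski a b"
    unfolding lorentzian_def by blast
  have "\<forall>i<4. \<forall>k<4. (\<Sum>j\<in>idx. (minkowski i i * (\<Sum>l\<in>idx. e i l * g l j)) * e k j)
                      = (if i = k then 1 else 0)"
  proof (intro allI impI)
    fix i k :: nat assume ik: "i < 4" "k < 4"
    have "(\<Sum>j\<in>idx. (minkowski i i * (\<Sum>l\<in>idx. e i l * g l j)) * e k j)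
        = minkowski i i * (\<Sum>l\<in>idx. \<Sum>j\<in>idx. g l j * e i l * e k j)"
      by (simp add: sum_distrib_left sum_distrib_right mult_ac) (rule sum.swap)
    also have "\<dots> = minkowski i i * minkowski i k" using e ik by simp
    finally show "(\<Sum>j\<in>idx. (minkowski i i * (\<Sum>l\<in>idx. e i l * g l j)) * e k j)
                    = (if i = k then 1 else 0)"
      by (simp add: minkowski_def)
  qed
  from square_right_inverse_imp_left_inverse[OF this] e that show ?thesis by blast
qed


lemma minkowski_orthogonal_to_unit_timelike:
  fixes x0 x1 x2 x3 v0 v1 v2 v3 :: real
  assumes h1: "-x0*x0 + x1*x1 + x2*x2 + x3*x3 = -1"
    and h2: "-x0*v0 + x1*v1 + x2*v2 + x3*v3 = 0"
  shows "0 \<le> -v0*v0 + v1*v1 + v2*v2 + v3*v3"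
    and "-v0*v0 + v1*v1 + v2*v2 + v3*v3 = 0 \<Longrightarrow> v0 = 0 \<and> v1 = 0 \<and> v2 = 0 \<and> v3 = 0"
proof -
  define N where "N = -v0*v0 + v1*v1 + v2*v2 + v3*v3"
  have a: "x0*x0 = 1 + x1*x1 + x2*x2 + x3*x3" using h1 by linarith
  have b: "x0*v0 = x1*v1 + x2*v2 + x3*v3" using h2 by linarith
  have "x0*x0 * N = x0*x0*(v1*v1+v2*v2+v3*v3) - (x0*v0)*(x0*v0)"
    unfolding N_def by (simp add: algebra_simps)
  also have "\<dots> = (1 + x1*x1 + x2*x2 + x3*x3)*(v1*v1+v2*v2+v3*v3)
                   - (x1*v1 + x2*v2 + x3*v3)*(x1*v1 + x2*v2 + x3*v3)"
    unfolding a b ..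
  also have "\<dots> = (v1*v1+v2*v2+v3*v3) + (x1*v2-x2*v1)*(x1*v2-x2*v1)
                   + (x1*v3-x3*v1)*(x1*v3-x3*v1) + (x2*v3-x3*v2)*(x2*v3-x3*v2)"
    by (simp add: algebra_simps)
  finally have key: "x0*x0 * N = (v1*v1+v2*v2+v3*v3) + (x1*v2-x2*v1)*(x1*v2-x2*v1)
                   + (x1*v3-x3*v1)*(x1*v3-x3*v1) + (x2*v3-x3*v2)*(x2*v3-x3*v2)" .
  have sq: "x1*x1 \<ge> 0" "x2*x2 \<ge> 0" "x3*x3 \<ge> 0" "v1*v1 \<ge> 0" "v2*v2 \<ge> 0" "v3*v3 \<ge> 0"
    by simp_all
  have x0: "x0*x0 \<ge> 1" using a sq by linarith
  have lower: "x0*x0*N \<ge> v1*v1+v2*v2+v3*v3"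
    unfolding key using zero_le_square[of "x1*v2-x2*v1"] zero_le_square[of "x1*v3-x3*v1"]
      zero_le_square[of "x2*v3-x3*v2"]
    by linarith
  with sq have "x0*x0*N \<ge> 0" by linarith
  with x0 show "0 \<le> -v0*v0 + v1*v1 + v2*v2 + v3*v3"
    unfolding N_def[symmetric] by (simp add: zero_le_mult_iff)
  assume "-v0*v0 + v1*v1 + v2*v2 + v3*v3 = 0"
  with lower have "v1*v1+v2*v2+v3*v3 \<le> 0" unfolding N_def by simp
  with sq have "v1*v1 = 0" "v2*v2 = 0" "v3*v3 = 0" by linarith+
  then have v123: "v1 = 0" "v2 = 0" "v3 = 0" by simp_all
  with b x0 have "v0 = 0" by auto
  with v123 show "v0 = 0 \<and> v1 = 0 \<and> v2 = 0 \<and> v3 = 0" by simp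
qed

lemma ip_eq_sum_lower: "ip g u v = (\<Sum>a\<in>idx. u a * lower g v a)"
  unfolding ip_def lower_def by (simp add: sum_distrib_left mult_ac)

lemma ip_cong_left: "(\<And>i. i < 4 \<Longrightarrow> v i = w i) \<Longrightarrow> ip g v u = ip g w u"
  unfolding ip_def by (intro sum.cong refl) auto

lemma ip_lin_left: "ip g (\<lambda>i. s * v i + t * w i) u = s * ip g v u + t * ip g w u"
  unfolding ip_def by (simp add: sum.distrib sum_distrib_left algebra_simps)

lemma ip_comb_right:
  "ip g u (\<lambda>i. b i + s * v i + t * w i) = ip g u b + s * ip g u v + t * ip g u w"
  unfolding ip_def by (simp add: sum.distrib sum_distrib_left algebra_simps)

lemma ip_zero_right: "ip g u (\<lambda>i. 0) = 0"
  unfolding ip_def by simp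

lemma lower_lin: "lower g (\<lambda>i. s * v i + t * w i) a = s * lower g v a + t * lower g w a"
  unfolding lower_def by (simp add: sum.distrib sum_distrib_left algebra_simps)

lemma lower_cong: "(\<And>i. i < 4 \<Longrightarrow> v i = w i) \<Longrightarrow> lower g v a = lower g w a"
  unfolding lower_def by (intro sum.cong refl) auto

locale spacetime =
  fixes g :: tens2
  assumes lorentzian: "lorentzian g"
begin

lemma metric_sym: "i < 4 \<Longrightarrow> k < 4 \<Longrightarrow> g i k = g k i"
  using lorentzian unfolding lorentzian_def by blast

lemma ginv_inverse:
  shows ginv_metric: "i < 4 \<Longrightarrow> k < 4 \<Longrightarrow> (\<Sum>j\<in>idx. ginv g i j * g j k) = (if i = k then 1 else 0)"
    and metric_ginv: "i < 4 \<Longrightarrow> k < 4 \<Longrightarrow> (\<Sum>j\<in>idx. g i j * ginv g j k) = (if i = k then 1 else 0)"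
    and ginv_sym: "i < 4 \<Longrightarrow> k < 4 \<Longrightarrow> ginv g i k = ginv g k i"
proof -
  obtain e where "\<forall>a<4. \<forall>b<4. (\<Sum>\<mu>\<in>idx. \<Sum>\<nu>\<in>idx. g \<mu> \<nu> * e a \<mu> * e b \<nu>) = minkowski a b"
    and e: "\<forall>i<4. \<forall>k<4. (\<Sum>j\<in>idx. e j i * (minkowski j j * (\<Sum>l\<in>idx. e j l * g l k)))
                          = (if i = k then 1 else 0)"
    by (rule lorentzian_orthonormal_frame[OF lorentzian])
  define h where "h i k = (\<Sum>a\<in>idx. e a i * minkowski a a * e a k)" for i k
  have h_sym: "h i k = h k i" for i k
    unfolding h_def by (simp add: mult_ac)
  have h_left: "\<forall>i<4. \<forall>k<4. (\<Sum>j\<in>idx. h i j * g j k) = (if i = k then 1 else 0)"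
  proof (intro allI impI)
    fix i k :: nat assume "i < 4" "k < 4"
    moreover have "(\<Sum>j\<in>idx. h i j * g j k)
                 = (\<Sum>j\<in>idx. e j i * (minkowski j j * (\<Sum>l\<in>idx. e j l * g l k)))"
      unfolding h_def sum_distrib_right sum_distrib_left
      by (subst sum.swap) (simp add: mult_ac)
    ultimately show "(\<Sum>j\<in>idx. h i j * g j k) = (if i = k then 1 else 0)" using e by simp
  qed
  have h_right: "(\<Sum>j\<in>idx. g i j * h j k) = (if i = k then 1 else 0)" if "i < 4" "k < 4" for i k
  proof -
    have "(\<Sum>j\<in>idx. g i j * h j k) = (\<Sum>j\<in>idx. h k j * g j i)"
      using that by (intro sum.cong refl) (simp add: metric_sym[of i] h_sym[of _ k] mult.commute)
    with h_left that show ?thesis by auto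
  qed
  from h_left have "\<exists>h. \<forall>i<4. \<forall>k<4. (\<Sum>j\<in>idx. h i j * g j k) = (if i = k then 1 else 0)"
    by blast
  then have left: "\<forall>i<4. \<forall>k<4. (\<Sum>j\<in>idx. ginv g i j * g j k) = (if i = k then 1 else 0)"
    unfolding ginv_def by (rule someI_ex)
  have ginv_h: "ginv g i k = h i k" if "i < 4" "k < 4" for i k
  proof -
    have "ginv g i k = (\<Sum>j\<in>idx. ginv g i j * (if j = k then 1 else 0))"
      using that by (simp add: sum_delta_right)
    also have "\<dots> = (\<Sum>j\<in>idx. ginv g i j * (\<Sum>l\<in>idx. g j l * h l k))"
      using that by (intro sum.cong refl) (simp add: h_right)
    also have "\<dots> = (\<Sum>l\<in>idx. (\<Sum>j\<in>idx. ginv g i j * g j l) * h l k)"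
      unfolding sum_distrib_left sum_distrib_right mult.assoc by (rule sum.swap)
    also have "\<dots> = h i k"
      using that left by (simp add: sum_delta_left)
    finally show ?thesis .
  qed
  show "i < 4 \<Longrightarrow> k < 4 \<Longrightarrow> (\<Sum>j\<in>idx. ginv g i j * g j k) = (if i = k then 1 else 0)"
    using left by blast
  show "i < 4 \<Longrightarrow> k < 4 \<Longrightarrow> (\<Sum>j\<in>idx. g i j * ginv g j k) = (if i = k then 1 else 0)"
  proof -
    assume "i < 4" "k < 4"
    then have "(\<Sum>j\<in>idx. g i j * ginv g j k) = (\<Sum>j\<in>idx. g i j * h j k)"
      by (intro sum.cong refl) (simp add: ginv_h)
    with h_right \<open>i < 4\<close> \<open>k < 4\<close> show ?thesis by simp
  qed
  show "i < 4 \<Longrightarrow> k < 4 \<Longrightarrow> ginv g i k = ginv g k i"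
    by (simp add: ginv_h h_sym)
qed

lemma frame_coordinates:
  obtains e and co :: "(nat \<Rightarrow> real) \<Rightarrow> nat \<Rightarrow> real"
  where "\<forall>u. \<forall>i<4. u i = (\<Sum>j\<in>idx. e j i * co u j)"
    and "\<forall>u w. ip g u w = - co u 0 * co w 0 + co u 1 * co w 1 + co u 2 * co w 2 + co u 3 * co w 3"
proof -
  obtain e where orth: "\<forall>a<4. \<forall>b<4. (\<Sum>\<mu>\<in>idx. \<Sum>\<nu>\<in>idx. g \<mu> \<nu> * e a \<mu> * e b \<nu>) = minkowski a b"
    and compl: "\<forall>i<4. \<forall>k<4. (\<Sum>j\<in>idx. e j i * (minkowski j j * (\<Sum>l\<in>idx. e j l * g l k)))
                               = (if i = k then 1 else 0)"
    by (rule lorentzian_orthonormal_frame[OF lorentzian])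
  define co where "co u j = (\<Sum>k\<in>idx. minkowski j j * (\<Sum>l\<in>idx. e j l * g l k) * u k)"
    for u :: "nat \<Rightarrow> real" and j
  have rep: "u i = (\<Sum>j\<in>idx. e j i * co u j)" if "i < 4" for u i
  proof -
    have "(\<Sum>j\<in>idx. e j i * co u j)
        = (\<Sum>k\<in>idx. (\<Sum>j\<in>idx. e j i * (minkowski j j * (\<Sum>l\<in>idx. e j l * g l k))) * u k)"
      unfolding co_def sum_distrib_left sum_distrib_right by (subst sum.swap) (simp add: mult_ac)
    also have "\<dots> = u i"
      using compl that by (simp add: sum_delta_left)
    finally show ?thesis by simp
  qed
  have "ip g u w = - co u 0 * co w 0 + co u 1 * co w 1 + co u 2 * co w 2 + co u 3 * co w 3" for u w
  proof -
    have "ip g u w = (\<Sum>\<mu>\<in>idx. \<Sum>\<nu>\<in>idx. g \<mu> \<nu> * (\<Sum>a\<in>idx. e a \<mu> * co u a) * (\<Sum>b\<in>idx. e b \<nu> * co w b))"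
      unfolding ip_def by (intro sum.cong refl) (simp add: rep[symmetric])
    also have "\<dots> = (\<Sum>\<mu>\<in>idx. \<Sum>\<nu>\<in>idx. \<Sum>a\<in>idx. \<Sum>b\<in>idx. co u a * co w b * (g \<mu> \<nu> * e a \<mu> * e b \<nu>))"
      by (intro sum.cong refl) (simp only: sum_product sum_distrib_left mult_ac)
    also have "\<dots> = (\<Sum>a\<in>idx. \<Sum>b\<in>idx. co u a * co w b * minkowski a b)"
      by (subst sum_swap4) (intro sum.cong refl, simp only: sum_distrib_left[symmetric] orth lessThan_iff)
    also have "\<dots> = - co u 0 * co w 0 + co u 1 * co w 1 + co u 2 * co w 2 + co u 3 * co w 3"
      by (simp add: sum_idx_expand minkowski_def)
    finally show ?thesis .
  qed
  with rep that show ?thesis by blast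
qed

lemma orthogonal_to_unit_timelike:
  assumes "ip g x x = -1" and "ip g x v = 0"
  shows orthogonal_to_unit_timelike_nonneg: "0 \<le> ip g v v"
    and orthogonal_to_unit_timelike_null: "ip g v v = 0 \<Longrightarrow> \<forall>i<4. v i = 0"
proof -
  obtain e co where rep: "\<forall>u. \<forall>i<4. u i = (\<Sum>j\<in>idx. e j i * co u j)"
    and ipc: "\<forall>u w. ip g u w = - co u 0 * co w 0 + co u 1 * co w 1 + co u 2 * co w 2 + co u 3 * co w 3"
    by (rule frame_coordinates)
  note mink = minkowski_orthogonal_to_unit_timelike[of "co x 0" "co x 1" "co x 2" "co x 3"
      "co v 0" "co v 1" "co v 2" "co v 3"]
  have h1: "- co x 0 * co x 0 + co x 1 * co x 1 + co x 2 * co x 2 + co x 3 * co x 3 = -1"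
    using assms(1) ipc by simp
  have h2: "- co x 0 * co v 0 + co x 1 * co v 1 + co x 2 * co v 2 + co x 3 * co v 3 = 0"
    using assms(2) ipc by simp
  show "0 \<le> ip g v v" using mink(1)[OF h1 h2] ipc by simp
  assume "ip g v v = 0"
  with mink(2)[OF h1 h2] ipc have "\<forall>j\<in>idx. co v j = 0"
    by (auto simp: less_Suc_eq numeral_eq_Suc)
  with rep show "\<forall>i<4. v i = 0" by (metis (no_types, lifting) mult_zero_right sum.neutral)
qed

lemma ginv_lower: "k < 4 \<Longrightarrow> (\<Sum>m\<in>idx. ginv g k m * lower g v m) = v k"
  unfolding lower_def sum_distrib_left mult.assoc[symmetric]
  by (subst sum.swap) (simp add: sum_distrib_right[symmetric] ginv_metric sum_delta_left)

lemma lower_ginv: "k < 4 \<Longrightarrow> (\<Sum>m\<in>idx. lower g v m * ginv g m k) = v k"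
  using ginv_lower[of k v] by (simp add: ginv_sym mult.commute)

lemma lower_raise: "a < 4 \<Longrightarrow> (\<Sum>m\<in>idx. g a m * (\<Sum>j\<in>idx. ginv g m j * s j)) = s a"
  unfolding sum_distrib_left mult.assoc[symmetric]
  by (subst sum.swap) (simp add: sum_distrib_right[symmetric] metric_ginv sum_delta_left)

lemma ip_sym: "ip g u v = ip g v u"
  unfolding ip_def by (subst sum.swap) (intro sum.cong refl, simp add: metric_sym mult_ac)

lemma ip_eq_sum_lower_left: "ip g u v = (\<Sum>a\<in>idx. lower g u a * v a)"
  using ip_eq_sum_lower[of g v u] ip_sym by (simp add: mult.commute)

lemma sq2_contract_left:
  "(\<Sum>k\<in>idx. p k * sq2 g A k l) = (\<Sum>m\<in>idx. \<Sum>n\<in>idx. (\<Sum>k\<in>idx. p k * A k m) * ginv g m n * A n l)"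
  unfolding sq2_def sum_distrib_left sum_distrib_right
  by (subst sum_swap3) (simp add: mult.assoc)

end

section \<open>The volume element and the dual of a simple bivector\<close>

lemma levi_sgn: "levi a b c d = real_of_int (sgn (int b - int a) * sgn (int c - int a) * sgn (int d - int a)
   * sgn (int c - int b) * sgn (int d - int b) * sgn (int d - int c))"
proof -
  have "{(i,j). i < j \<and> j < (4::nat)} = {(0,1),(0,2),(0,3),(1,2),(1,3),(2,3)}"
    by (auto simp: less_Suc_eq numeral_eq_Suc)
  then show ?thesis unfolding levi_def Let_def by (simp add: mult_ac)
qed

lemma vol_antisym:
  shows vol_swap12: "vol g a b c d = - vol g b a c d"
    and vol_swap13: "vol g a b c d = - vol g c b a d"
    and vol_swap34: "vol g a b c d = - vol g a b d c"
proof -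
  have sgn_swap: "sgn (p - q) = - sgn (q - p)" for p q :: int
    by (simp add: sgn_if)
  note swaps = sgn_swap[of "int a" "int b"] sgn_swap[of "int a" "int c"] sgn_swap[of "int a" "int d"]
    sgn_swap[of "int b" "int c"] sgn_swap[of "int b" "int d"] sgn_swap[of "int c" "int d"]
  show "vol g a b c d = - vol g b a c d" "vol g a b c d = - vol g c b a d"
    "vol g a b c d = - vol g a b d c"
    unfolding vol_def levi_sgn by (simp_all only: swaps) (simp_all add: mult_ac)
qed

definition dual_wedge :: "tens2 \<Rightarrow> (nat \<Rightarrow> real) \<Rightarrow> (nat \<Rightarrow> real) \<Rightarrow> tens2" where
  "dual_wedge g x y a b = (\<Sum>k\<in>idx. \<Sum>l\<in>idx. vol g a b k l * x k * y l)"

lemma dual_wedge_swap: "dual_wedge g y x a b = - dual_wedge g x y a b"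
proof -
  have "dual_wedge g y x a b = (\<Sum>l\<in>idx. \<Sum>k\<in>idx. - (vol g a b l k * x l * y k))"
    unfolding dual_wedge_def by (subst sum.swap) (intro sum.cong refl, subst vol_swap34, simp)
  then show ?thesis
    unfolding dual_wedge_def by (simp add: sum_negf)
qed

lemma dual_wedge_antisym: "dual_wedge g x y b a = - dual_wedge g x y a b"
  unfolding dual_wedge_def by (simp add: vol_swap12[of g b] sum_negf)

lemma contract_x_dual_wedge: "(\<Sum>a\<in>idx. x a * dual_wedge g x y a b) = 0"
proof -
  have "(\<Sum>a\<in>idx. x a * dual_wedge g x y a b)
      = (\<Sum>a\<in>idx. \<Sum>k\<in>idx. (\<Sum>l\<in>idx. vol g a b k l * y l) * x a * x k)"
    unfolding dual_wedge_def by (simp add: sum_distrib_left sum_distrib_right mult_ac)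
  also have "\<dots> = 0"
  proof (rule sum_antisym_quadratic)
    fix a k
    show "(\<Sum>l\<in>idx. vol g a b k l * y l) = - (\<Sum>l\<in>idx. vol g k b a l * y l)"
      unfolding sum_negf[symmetric] by (intro sum.cong refl, subst vol_swap13, simp)
  qed
  finally show ?thesis .
qed

lemma contract_y_dual_wedge: "(\<Sum>a\<in>idx. y a * dual_wedge g x y a b) = 0"
  using contract_x_dual_wedge[of y g x b] by (simp add: dual_wedge_swap[of g y x] sum_negf)

lemma dual_wedge_contract_x: "(\<Sum>b\<in>idx. dual_wedge g x y a b * x b) = 0"
  using contract_x_dual_wedge[of x g y a] by (simp add: dual_wedge_antisym[of g x y a] sum_negf mult.commute)

lemma dual_wedge_contract_y: "(\<Sum>b\<in>idx. dual_wedge g x y a b * y b) = 0"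
  using contract_y_dual_wedge[of y g x a] by (simp add: dual_wedge_antisym[of g x y a] sum_negf mult.commute)

lemma timelike_volume_form_nonzero:
  assumes "timelike_volume_form g U x y"
  shows "\<exists>c<4. \<exists>d<4. U c d \<noteq> 0"
proof (rule ccontr)
  assume "\<not> ?thesis"
  then have "(\<Sum>c\<in>idx. \<Sum>d\<in>idx. x c * U c d * y d) = 0" by simp
  moreover have "(\<Sum>c\<in>idx. \<Sum>d\<in>idx. x c * U c d * y d) = ip g x x * ip g y y - ip g x y * ip g y x"
  proof -
    have "(\<Sum>c\<in>idx. \<Sum>d\<in>idx. x c * U c d * y d)
        = (\<Sum>c\<in>idx. \<Sum>d\<in>idx. (x c * lower g x c) * (y d * lower g y d) - (x c * lower g y c) * (y d * lower g x d))"
      using assms by (intro sum.cong refl) (simp add: timelike_volume_form_def wedge1_def right_diff_distrib left_diff_distrib mult_ac)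
    then show ?thesis
      by (simp add: sum_subtractf sum_product[symmetric] ip_eq_sum_lower)
  qed
  ultimately show False
    using assms by (simp add: timelike_volume_form_def)
qed

section \<open>Timelike planes\<close>

lemma in_plane_basis: "in_plane x y x" "in_plane x y y"
  unfolding in_plane_def
  by (rule exI[of _ 1], rule exI[of _ 0], simp) (rule exI[of _ 0], rule exI[of _ 1], simp)

lemma in_plane_eq_of_basis_change:
  fixes x y x' y' :: "nat \<Rightarrow> real"
  assumes x': "\<forall>i<4. x' i = \<alpha> * x i + \<beta> * y i" and y': "\<forall>i<4. y' i = \<gamma> * x i + \<delta> * y i"
    and det: "\<alpha> * \<delta> - \<beta> * \<gamma> \<noteq> 0"
  shows "in_plane x y v \<longleftrightarrow> in_plane x' y' v"
proof
  assume "in_plane x y v"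
  then obtain s t where st: "\<forall>i<4. v i = s * x i + t * y i" unfolding in_plane_def by blast
  define D where "D = \<alpha> * \<delta> - \<beta> * \<gamma>"
  have "\<forall>i<4. v i = ((s * \<delta> - t * \<gamma>) / D) * x' i + ((t * \<alpha> - s * \<beta>) / D) * y' i"
  proof (intro allI impI)
    fix i :: nat assume i: "i < 4"
    have "((s * \<delta> - t * \<gamma>) / D) * x' i + ((t * \<alpha> - s * \<beta>) / D) * y' i
        = (D * (s * x i + t * y i)) / D"
      using x' y' i unfolding D_def by (simp add: add_divide_distrib[symmetric] algebra_simps)
    also have "\<dots> = v i" using det st i unfolding D_def by simp
    finally show "v i = ((s * \<delta> - t * \<gamma>) / D) * x' i + ((t * \<alpha> - s * \<beta>) / D) * y' i" ..
  qed
  then show "in_plane x' y' v" unfolding in_plane_def by blast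
next
  assume "in_plane x' y' v"
  then obtain s t where "\<forall>i<4. v i = s * x' i + t * y' i" unfolding in_plane_def by blast
  with x' y' have "\<forall>i<4. v i = (s * \<alpha> + t * \<gamma>) * x i + (s * \<beta> + t * \<delta>) * y i"
    by (simp add: algebra_simps)
  then show "in_plane x y v" unfolding in_plane_def by blast
qed

lemma minkowski_orthonormal_det_nonzero:
  fixes \<alpha> \<beta> \<gamma> \<delta> :: real
  assumes "- \<alpha> * \<alpha> + \<beta> * \<beta> = -1" "- \<gamma> * \<gamma> + \<delta> * \<delta> = 1" "- \<alpha> * \<gamma> + \<beta> * \<delta> = 0"
  shows "\<alpha> * \<delta> - \<beta> * \<gamma> \<noteq> 0"
proof -
  have "(\<alpha> * \<delta> - \<beta> * \<gamma>) * (\<alpha> * \<delta> - \<beta> * \<gamma>)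
     = (\<alpha> * \<alpha> - \<beta> * \<beta>) * (\<delta> * \<delta> - \<gamma> * \<gamma>) + (\<alpha> * \<gamma> - \<beta> * \<delta>) * (\<alpha> * \<gamma> - \<beta> * \<delta>)"
    by (simp add: algebra_simps)
  also have "\<dots> = 1"
    using assms by (simp add: algebra_simps)
  finally show ?thesis by auto
qed

lemma wedge1_lower_basis_change:
  assumes "\<forall>i<4. x' i = \<alpha> * x i + \<beta> * y i" and "\<forall>i<4. y' i = \<gamma> * x i + \<delta> * y i"
  shows "wedge1 (lower g x') (lower g y') a b = (\<alpha> * \<delta> - \<beta> * \<gamma>) * wedge1 (lower g x) (lower g y) a b"
proof -
  have "lower g x' c = \<alpha> * lower g x c + \<beta> * lower g y c" "lower g y' c = \<gamma> * lower g x c + \<delta> * lower g y c"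
    for c
    using lower_cong[of x' "\<lambda>i. \<alpha> * x i + \<beta> * y i" g c] lower_cong[of y' "\<lambda>i. \<gamma> * x i + \<delta> * y i" g c] assms
    by (simp_all add: lower_lin)
  then show ?thesis
    unfolding wedge1_def by (simp add: algebra_simps)
qed

lemma hodge2_scale:
  "(\<And>a b. a < 4 \<Longrightarrow> b < 4 \<Longrightarrow> F a b = c * G a b) \<Longrightarrow> hodge2 g F a b = c * hodge2 g G a b"
  unfolding hodge2_def by (simp add: sum_distrib_left mult_ac)

text \<open>\<open>sym_contraction g R F l n\<close> is \<open>2 R^m_(l F_n)m\<close>.\<close>

definition sym_contraction :: "tens2 \<Rightarrow> tens2 \<Rightarrow> tens2 \<Rightarrow> nat \<Rightarrow> nat \<Rightarrow> real" where
  "sym_contraction g R F l n =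
     (\<Sum>m\<in>idx. \<Sum>k\<in>idx. ginv g m k * R k l * F n m + ginv g m k * R k n * F l m)"

lemma sym_contraction_scale:
  "(\<And>a b. a < 4 \<Longrightarrow> b < 4 \<Longrightarrow> F a b = c * G a b) \<Longrightarrow> l < 4 \<Longrightarrow> n < 4
     \<Longrightarrow> sym_contraction g R F l n = c * sym_contraction g R G l n"
  unfolding sym_contraction_def by (simp add: sum_distrib_left algebra_simps)

definition eval2 :: "tens2 \<Rightarrow> (nat \<Rightarrow> real) \<Rightarrow> (nat \<Rightarrow> real) \<Rightarrow> real" where
  "eval2 T p q = (\<Sum>k\<in>idx. \<Sum>l\<in>idx. p k * T k l * q l)"

locale timelike_plane = spacetime +
  fixes U :: tens2 and x y :: "nat \<Rightarrow> real"
  assumes volume_form: "timelike_volume_form g U x y"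
begin

lemma frame:
  shows x_timelike: "ip g x x = -1"
    and y_spacelike: "ip g y y = 1"
    and x_orth_y: "ip g x y = 0"
    and y_orth_x: "ip g y x = 0"
  using volume_form ip_sym[of y x] by (simp_all add: timelike_volume_form_def)

lemma U_eq: "a < 4 \<Longrightarrow> b < 4 \<Longrightarrow> U a b = lower g x a * lower g y b - lower g y a * lower g x b"
  using volume_form by (simp add: timelike_volume_form_def wedge1_def)

lemma raise_U:
  assumes "k < 4" "l < 4"
  shows "(\<Sum>m\<in>idx. \<Sum>n\<in>idx. ginv g k m * (ginv g l n * U m n)) = x k * y l - y k * x l"
proof -
  have "(\<Sum>m\<in>idx. \<Sum>n\<in>idx. ginv g k m * (ginv g l n * U m n))
     = (\<Sum>m\<in>idx. \<Sum>n\<in>idx. ginv g k m * lower g x m * (ginv g l n * lower g y n)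
                             - ginv g k m * lower g y m * (ginv g l n * lower g x n))"
    by (intro sum.cong refl) (simp add: U_eq algebra_simps)
  also have "\<dots> = (\<Sum>m\<in>idx. ginv g k m * lower g x m) * (\<Sum>n\<in>idx. ginv g l n * lower g y n)
      - (\<Sum>m\<in>idx. ginv g k m * lower g y m) * (\<Sum>n\<in>idx. ginv g l n * lower g x n)"
    by (simp add: sum_product sum_subtractf)
  also have "\<dots> = x k * y l - y k * x l"
    using assms by (simp add: ginv_lower)
  finally show ?thesis .
qed

lemma hodge_U: "hodge2 g U a b = dual_wedge g x y a b"
proof -
  have "hodge2 g U a b = 1/2 * (\<Sum>k\<in>idx. \<Sum>l\<in>idx. vol g a b k l * (\<Sum>m\<in>idx. \<Sum>n\<in>idx. ginv g k m * (ginv g l n * U m n)))"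
    unfolding hodge2_def by (simp add: sum_distrib_left mult.assoc)
  also have "\<dots> = 1/2 * (\<Sum>k\<in>idx. \<Sum>l\<in>idx. vol g a b k l * x k * y l - vol g a b k l * y k * x l)"
    by (intro arg_cong[where f="\<lambda>t. 1/2 * t"] sum.cong refl) (simp add: raise_U right_diff_distrib mult.assoc)
  also have "\<dots> = 1/2 * (dual_wedge g x y a b - dual_wedge g y x a b)"
    unfolding dual_wedge_def by (simp add: sum_subtractf)
  finally show ?thesis
    by (simp add: dual_wedge_swap[of g y x])
qed

lemma ginv_U:
  assumes "m < 4" "b < 4"
  shows "(\<Sum>n\<in>idx. ginv g m n * U n b) = x m * lower g y b - y m * lower g x b"
proof -
  have "(\<Sum>n\<in>idx. ginv g m n * U n b)
      = (\<Sum>n\<in>idx. ginv g m n * lower g x n) * lower g y b - (\<Sum>n\<in>idx. ginv g m n * lower g y n) * lower g x b"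
    unfolding sum_distrib_right sum_subtractf[symmetric]
    using assms by (intro sum.cong refl) (simp add: U_eq algebra_simps)
  with assms show ?thesis by (simp add: ginv_lower)
qed

lemma U_ginv:
  assumes "n < 4" "k < 4"
  shows "(\<Sum>m\<in>idx. U n m * ginv g m k) = lower g x n * y k - lower g y n * x k"
proof -
  have "(\<Sum>m\<in>idx. U n m * ginv g m k)
      = lower g x n * (\<Sum>m\<in>idx. lower g y m * ginv g m k) - lower g y n * (\<Sum>m\<in>idx. lower g x m * ginv g m k)"
    unfolding sum_distrib_left sum_subtractf[symmetric]
    using assms by (intro sum.cong refl) (simp add: U_eq algebra_simps)
  with assms show ?thesis by (simp add: lower_ginv)
qed

lemma contract_U:
  assumes "m < 4"
  shows "(\<Sum>n\<in>idx. u n * U n m) = ip g u x * lower g y m - ip g u y * lower g x m"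
proof -
  have "(\<Sum>n\<in>idx. u n * U n m)
      = (\<Sum>n\<in>idx. u n * lower g x n) * lower g y m - (\<Sum>n\<in>idx. u n * lower g y n) * lower g x m"
    unfolding sum_distrib_right sum_subtractf[symmetric]
    using assms by (intro sum.cong refl) (simp add: U_eq algebra_simps)
  then show ?thesis by (simp add: ip_eq_sum_lower)
qed

lemma sq2_U:
  assumes "a < 4" "b < 4"
  shows "sq2 g U a b = - lower g x a * lower g x b + lower g y a * lower g y b"
proof -
  have "sq2 g U a b = (\<Sum>m\<in>idx. U a m * (\<Sum>n\<in>idx. ginv g m n * U n b))"
    unfolding sq2_def by (simp add: sum_distrib_left mult.assoc)
  also have "\<dots> = (\<Sum>m\<in>idx. (lower g x a * lower g y m - lower g y a * lower g x m)
                             * (x m * lower g y b - y m * lower g x b))"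
    using assms by (intro sum.cong refl) (simp add: ginv_U, simp add: U_eq)
  also have "\<dots> = lower g x a * lower g y b * ip g x y - lower g x a * lower g x b * ip g y y
                 - lower g y a * lower g y b * ip g x x + lower g y a * lower g x b * ip g y x"
    by (simp add: ip_eq_sum_lower sum_distrib_left sum_subtractf[symmetric] sum.distrib[symmetric]
        algebra_simps)
  also have "\<dots> = - lower g x a * lower g x b + lower g y a * lower g y b"
    by (simp add: frame)
  finally show ?thesis .
qed

lemma contract_U_twice:
  "(\<Sum>n\<in>idx. \<Sum>l\<in>idx. u n * v l * (\<Sum>m\<in>idx. \<Sum>k\<in>idx. ginv g m k * T k l * U n m))
     = ip g u x * eval2 T y v - ip g u y * eval2 T x v"
proof -
  have "(\<Sum>n\<in>idx. \<Sum>l\<in>idx. u n * v l * (\<Sum>m\<in>idx. \<Sum>k\<in>idx. ginv g m k * T k l * U n m))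
      = (\<Sum>m\<in>idx. \<Sum>k\<in>idx. \<Sum>l\<in>idx. \<Sum>n\<in>idx. (u n * U n m) * ginv g m k * (T k l * v l))"
    unfolding sum_distrib_left by (subst sum.swap) (subst sum_swap4, simp add: mult_ac)
  also have "\<dots> = (\<Sum>m\<in>idx. \<Sum>k\<in>idx. (\<Sum>n\<in>idx. u n * U n m) * ginv g m k * (\<Sum>l\<in>idx. T k l * v l))"
    by (simp add: sum_distrib_left sum_distrib_right)
  also have "\<dots> = (\<Sum>k\<in>idx. (\<Sum>m\<in>idx. (ip g u x * lower g y m - ip g u y * lower g x m) * ginv g m k)
                              * (\<Sum>l\<in>idx. T k l * v l))"
    by (subst sum.swap) (simp add: contract_U sum_distrib_right)
  also have "\<dots> = (\<Sum>k\<in>idx. (ip g u x * y k - ip g u y * x k) * (\<Sum>l\<in>idx. T k l * v l))"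
    by (intro sum.cong refl)
      (simp add: left_diff_distrib sum_subtractf sum_distrib_left[symmetric] mult.assoc lower_ginv)
  also have "\<dots> = ip g u x * eval2 T y v - ip g u y * eval2 T x v"
    unfolding eval2_def
    by (simp add: left_diff_distrib sum_subtractf sum_distrib_left mult.assoc)
  finally show ?thesis .
qed

lemma sym_contraction_zero_imp_commute:
  assumes "\<forall>l<4. \<forall>n<4. sym_contraction g T U l n = 0"
  shows "ip g u x * eval2 T y v - ip g u y * eval2 T x v + ip g v x * eval2 T y u - ip g v y * eval2 T x u = 0"
proof -
  define C where "C l n = (\<Sum>m\<in>idx. \<Sum>k\<in>idx. ginv g m k * T k l * U n m)" for l n
  have "0 = (\<Sum>n\<in>idx. \<Sum>l\<in>idx. u n * v l * sym_contraction g T U l n)"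
    using assms by simp
  also have "\<dots> = (\<Sum>n\<in>idx. \<Sum>l\<in>idx. u n * v l * C l n) + (\<Sum>n\<in>idx. \<Sum>l\<in>idx. v n * u l * C l n)"
    unfolding sym_contraction_def C_def sum.distrib distrib_left
    by (subst (2) sum.swap) (simp add: mult_ac)
  finally show ?thesis
    unfolding C_def contract_U_twice by simp
qed

end


section \<open>Non-null electromagnetic Ricci tensors\<close>

locale nonnull_em_field = spacetime +
  fixes R :: tens2 and \<kappa> :: real and U :: tens2 and x y :: "nat \<Rightarrow> real"
  assumes nonnull_em: "nonnull_em g R \<kappa> U x y"

sublocale nonnull_em_field \<subseteq> timelike_plane g U x y
  using nonnull_em by unfold_locales (simp add: nonnull_em_def)

context nonnull_em_field
begin

abbreviation S :: tens2 where "S \<equiv> dual_wedge g x y"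

lemma kappa_pos: "0 < \<kappa>"
  using nonnull_em by (simp add: nonnull_em_def)

lemma ricci_eq:
  assumes "k < 4" "l < 4"
  shows "R k l = - \<kappa> * (sq2 g U k l + sq2 g S k l)"
proof -
  have "hodge2 g U = S" by (intro ext) (rule hodge_U)
  with nonnull_em assms show ?thesis by (simp add: nonnull_em_def)
qed

lemma contract_sq2_U:
  assumes "l < 4"
  shows "(\<Sum>k\<in>idx. p k * sq2 g U k l) = - ip g p x * lower g x l + ip g p y * lower g y l"
proof -
  have "(\<Sum>k\<in>idx. p k * sq2 g U k l)
      = (\<Sum>k\<in>idx. - (p k * lower g x k) * lower g x l + (p k * lower g y k) * lower g y l)"
    using assms by (intro sum.cong refl) (simp add: sq2_U algebra_simps)
  then show ?thesis
    by (simp add: sum_subtractf sum_distrib_right ip_eq_sum_lower)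
qed

lemma contract_ricci:
  "l < 4 \<Longrightarrow> (\<Sum>k\<in>idx. p k * R k l) = - \<kappa> * ((\<Sum>k\<in>idx. p k * sq2 g U k l) + (\<Sum>k\<in>idx. p k * sq2 g S k l))"
  by (simp add: ricci_eq sum_distrib_left sum.distrib[symmetric] algebra_simps)

lemma contract_sq2_S_x: "(\<Sum>k\<in>idx. x k * sq2 g S k l) = 0"
  unfolding sq2_contract_left by (simp add: contract_x_dual_wedge)

lemma contract_sq2_S_y: "(\<Sum>k\<in>idx. y k * sq2 g S k l) = 0"
  unfolding sq2_contract_left by (simp add: contract_y_dual_wedge)

lemma ricci_x: "l < 4 \<Longrightarrow> (\<Sum>k\<in>idx. x k * R k l) = - \<kappa> * lower g x l"
  by (simp add: contract_ricci contract_sq2_U contract_sq2_S_x frame)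

lemma ricci_y: "l < 4 \<Longrightarrow> (\<Sum>k\<in>idx. y k * R k l) = - \<kappa> * lower g y l"
  by (simp add: contract_ricci contract_sq2_U contract_sq2_S_y frame)

lemma ricci_U:
  assumes "n < 4" "l < 4"
  shows "(\<Sum>m\<in>idx. \<Sum>k\<in>idx. ginv g m k * R k l * U n m) = - \<kappa> * U n l"
proof -
  have "(\<Sum>m\<in>idx. \<Sum>k\<in>idx. ginv g m k * R k l * U n m) = (\<Sum>k\<in>idx. (\<Sum>m\<in>idx. U n m * ginv g m k) * R k l)"
    by (subst sum.swap) (simp add: sum_distrib_right sum_distrib_left mult_ac)
  also have "\<dots> = lower g x n * (\<Sum>k\<in>idx. y k * R k l) - lower g y n * (\<Sum>k\<in>idx. x k * R k l)"
    using assms by (simp add: U_ginv algebra_simps sum_subtractf sum_distrib_left)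
  also have "\<dots> = - \<kappa> * U n l"
    using assms by (simp add: ricci_x ricci_y U_eq algebra_simps)
  finally show ?thesis .
qed

lemma sym_contraction_U:
  assumes "l < 4" "n < 4"
  shows "sym_contraction g R U l n = 0"
proof -
  have "sym_contraction g R U l n = - \<kappa> * U n l + - \<kappa> * U l n"
    unfolding sym_contraction_def sum.distrib using assms by (simp only: ricci_U)
  then show ?thesis
    using assms by (simp add: U_eq algebra_simps)
qed

definition S_mixed :: "nat \<Rightarrow> nat \<Rightarrow> real" where
  "S_mixed n k = (\<Sum>m\<in>idx. S n m * ginv g m k)"

lemma S_mixed_orth: "ip g (S_mixed n) x = 0" "ip g (S_mixed n) y = 0"
proof -
  have "ip g (S_mixed n) v = (\<Sum>m\<in>idx. S n m * v m)" for v
  proof -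
    have "ip g (S_mixed n) v = (\<Sum>m\<in>idx. S n m * (\<Sum>k\<in>idx. ginv g m k * lower g v k))"
      unfolding ip_eq_sum_lower S_mixed_def sum_distrib_right sum_distrib_left
      by (subst sum.swap) (simp add: mult.assoc)
    then show ?thesis by (simp add: ginv_lower)
  qed
  then show "ip g (S_mixed n) x = 0" "ip g (S_mixed n) y = 0"
    by (simp_all add: dual_wedge_contract_x dual_wedge_contract_y)
qed

lemma ginv_S: "m < 4 \<Longrightarrow> (\<Sum>p\<in>idx. ginv g m p * S p l) = - S_mixed l m"
  unfolding S_mixed_def sum_negf[symmetric]
  by (intro sum.cong refl) (simp add: ginv_sym[of m] dual_wedge_antisym[of g x y _ l])

lemma ricci_S:
  assumes "n < 4" "l < 4"
  shows "(\<Sum>m\<in>idx. \<Sum>k\<in>idx. ginv g m k * R k l * S n m)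
           = \<kappa> * (\<Sum>m\<in>idx. (\<Sum>k\<in>idx. S_mixed n k * S k m) * S_mixed l m)"
proof -
  have "(\<Sum>m\<in>idx. \<Sum>k\<in>idx. ginv g m k * R k l * S n m) = (\<Sum>k\<in>idx. S_mixed n k * R k l)"
    unfolding S_mixed_def by (subst sum.swap) (simp add: sum_distrib_right sum_distrib_left mult_ac)
  also have "\<dots> = - \<kappa> * (\<Sum>k\<in>idx. S_mixed n k * sq2 g S k l)"
    using assms by (simp add: contract_ricci contract_sq2_U S_mixed_orth)
  also have "(\<Sum>k\<in>idx. S_mixed n k * sq2 g S k l)
      = - (\<Sum>m\<in>idx. (\<Sum>k\<in>idx. S_mixed n k * S k m) * S_mixed l m)"
    unfolding sq2_contract_left
    by (simp add: sum_distrib_left[symmetric] mult.assoc ginv_S sum_negf)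
  finally show ?thesis by simp
qed

text \<open>By \<open>ricci_S\<close>, \<open>R^m_l (*U)_nm\<close> is \<open>\<kappa>\<close> times the cube of the antisymmetric \<open>*U\<close>, which is
  again antisymmetric.\<close>

lemma sym_contraction_S:
  assumes "l < 4" "n < 4"
  shows "sym_contraction g R S l n = 0"
proof -
  have "sym_contraction g R S l n = \<kappa> * ((\<Sum>m\<in>idx. (\<Sum>k\<in>idx. S_mixed n k * S k m) * S_mixed l m)
                                       + (\<Sum>m\<in>idx. (\<Sum>k\<in>idx. S_mixed l k * S k m) * S_mixed n m))"
    unfolding sym_contraction_def sum.distrib using assms by (simp only: ricci_S distrib_left)
  also have "\<dots> = 0"
    by (simp add: sum_antisym_bilinear[OF dual_wedge_antisym])
  finally show ?thesis .
qed

definition S_cov :: "(nat \<Rightarrow> real) \<Rightarrow> nat \<Rightarrow> real" where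
  "S_cov p j = (\<Sum>k\<in>idx. p k * S k j)"

definition S_vec :: "(nat \<Rightarrow> real) \<Rightarrow> nat \<Rightarrow> real" where
  "S_vec p m = (\<Sum>j\<in>idx. ginv g m j * S_cov p j)"

lemma S_cov_comb: "S_cov (\<lambda>i. b i + s * x i + t * y i) = S_cov b"
proof
  fix j
  have "S_cov (\<lambda>i. b i + s * x i + t * y i) j
      = S_cov b j + s * (\<Sum>k\<in>idx. x k * S k j) + t * (\<Sum>k\<in>idx. y k * S k j)"
    unfolding S_cov_def by (simp add: sum.distrib sum_distrib_left algebra_simps)
  then show "S_cov (\<lambda>i. b i + s * x i + t * y i) j = S_cov b j"
    by (simp add: contract_x_dual_wedge contract_y_dual_wedge)
qed

lemma S_vec_comb: "S_vec (\<lambda>i. b i + s * x i + t * y i) = S_vec b"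
  unfolding S_vec_def by (simp add: S_cov_comb)

lemma S_vec_frame: "S_vec x = (\<lambda>i. 0)" "S_vec y = (\<lambda>i. 0)"
proof -
  have "S_vec (\<lambda>i. 0) = (\<lambda>i. 0)" by (simp add: fun_eq_iff S_vec_def S_cov_def)
  then show "S_vec x = (\<lambda>i. 0)" "S_vec y = (\<lambda>i. 0)"
    using S_vec_comb[of "\<lambda>i. 0" 1 0] S_vec_comb[of "\<lambda>i. 0" 0 1] by simp_all
qed

lemma x_orth_S_vec: "ip g x (S_vec q) = 0"
proof -
  have "ip g x (S_vec q) = (\<Sum>j\<in>idx. (\<Sum>a\<in>idx. lower g x a * ginv g a j) * S_cov q j)"
    unfolding ip_eq_sum_lower_left S_vec_def sum_distrib_left sum_distrib_right
    by (subst sum.swap) (simp add: mult.assoc)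
  also have "\<dots> = (\<Sum>j\<in>idx. x j * S_cov q j)"
    by (simp add: lower_ginv)
  also have "\<dots> = (\<Sum>k\<in>idx. q k * (\<Sum>j\<in>idx. S k j * x j))"
    unfolding S_cov_def sum_distrib_left by (subst sum.swap) (simp add: mult_ac)
  also have "\<dots> = 0"
    by (simp add: dual_wedge_contract_x)
  finally show ?thesis .
qed

lemma contract_sq2_S_twice:
  "(\<Sum>l\<in>idx. (\<Sum>k\<in>idx. p k * sq2 g S k l) * q l) = - ip g (S_vec p) (S_vec q)"
proof -
  have S_contract: "(\<Sum>l\<in>idx. S n l * q l) = - S_cov q n" for n
    unfolding S_cov_def sum_negf[symmetric]
    by (intro sum.cong refl) (simp add: dual_wedge_antisym[of g x y n])
  have "(\<Sum>l\<in>idx. (\<Sum>k\<in>idx. p k * sq2 g S k l) * q l)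
      = (\<Sum>m\<in>idx. \<Sum>n\<in>idx. S_cov p m * ginv g m n * (\<Sum>l\<in>idx. S n l * q l))"
    unfolding sq2_contract_left S_cov_def sum_distrib_right sum_distrib_left
    by (subst sum_swap3) (simp add: mult.assoc)
  also have "\<dots> = - (\<Sum>m\<in>idx. S_cov p m * S_vec q m)"
    unfolding S_contract S_vec_def by (simp add: sum_distrib_left sum_negf mult.assoc)
  also have "(\<Sum>m\<in>idx. S_cov p m * S_vec q m) = ip g (S_vec p) (S_vec q)"
    unfolding ip_eq_sum_lower_left by (intro sum.cong refl) (simp add: lower_def S_vec_def lower_raise)
  finally show ?thesis .
qed

lemma eval2_ricci:
  "eval2 R p q = - \<kappa> * (- ip g p x * ip g x q + ip g p y * ip g y q - ip g (S_vec p) (S_vec q))"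
proof -
  have "eval2 R p q = (\<Sum>l\<in>idx. (\<Sum>k\<in>idx. p k * R k l) * q l)"
    unfolding eval2_def by (subst sum.swap) (simp add: sum_distrib_right)
  also have "\<dots> = (\<Sum>l\<in>idx. - \<kappa> * ((- ip g p x) * (lower g x l * q l) + ip g p y * (lower g y l * q l)
        + (\<Sum>k\<in>idx. p k * sq2 g S k l) * q l))"
    by (intro sum.cong refl) (simp add: contract_ricci contract_sq2_U algebra_simps)
  also have "\<dots> = - \<kappa> * ((- ip g p x) * (\<Sum>l\<in>idx. lower g x l * q l) + ip g p y * (\<Sum>l\<in>idx. lower g y l * q l)
        + (\<Sum>l\<in>idx. (\<Sum>k\<in>idx. p k * sq2 g S k l) * q l))"
    by (simp only: sum.distrib sum_distrib_left[symmetric])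
  also have "\<dots> = - \<kappa> * (- ip g p x * ip g x q + ip g p y * ip g y q - ip g (S_vec p) (S_vec q))"
    by (simp add: ip_eq_sum_lower_left contract_sq2_S_twice)
  finally show ?thesis .
qed

lemma eval2_ricci_sym: "eval2 R p q = eval2 R q p"
  unfolding eval2_ricci by (simp add: ip_sym[of p] ip_sym[of q] ip_sym[of "S_vec p"])

lemma eval2_ricci_frame: "eval2 R p x = - \<kappa> * ip g p x" "eval2 R p y = - \<kappa> * ip g p y"
  by (simp_all add: eval2_ricci S_vec_frame ip_zero_right frame)

lemma ricci_eigenvector_orth_frame:
  assumes "\<forall>w. eval2 R p w = \<mu> * ip g w p"
  shows "(\<kappa> + \<mu>) * ip g x p = 0" "(\<kappa> + \<mu>) * ip g y p = 0"
  using assms[rule_format, of x] assms[rule_format, of y] ip_sym[of p]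
  by (simp_all add: eval2_ricci_frame algebra_simps)

lemma ricci_eigenvector_in_plane:
  assumes "\<forall>w. eval2 R p w = - \<kappa> * ip g w p"
  shows "\<forall>i<4. p i = - ip g x p * x i + ip g y p * y i"
proof -
  define \<alpha> where "\<alpha> = - ip g x p"
  define \<beta> where "\<beta> = ip g y p"
  define b where "b i = p i - \<alpha> * x i - \<beta> * y i" for i
  have p_eq: "p = (\<lambda>i. b i + \<alpha> * x i + \<beta> * y i)"
    unfolding b_def by (intro ext) simp
  have ip_p: "ip g v p = ip g v b + \<alpha> * ip g v x + \<beta> * ip g v y" for v
    by (subst p_eq) (rule ip_comb_right)
  have x_b: "ip g x b = 0" and y_b: "ip g y b = 0"
    using ip_p[of x, unfolded \<alpha>_def \<beta>_def] ip_p[of y, unfolded \<alpha>_def \<beta>_def]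
    by (simp_all add: frame)
  have "eval2 R p b = \<kappa> * ip g (S_vec b) (S_vec b)"
    using x_b y_b S_vec_comb[of b \<alpha> \<beta>] by (simp add: eval2_ricci flip: p_eq)
  moreover have "eval2 R p b = - \<kappa> * ip g b b"
    using assms ip_p[of b] x_b y_b ip_sym[of b x] ip_sym[of b y] by simp
  ultimately have "\<kappa> * (ip g (S_vec b) (S_vec b) + ip g b b) = 0"
    by (simp add: algebra_simps)
  with kappa_pos have "ip g (S_vec b) (S_vec b) + ip g b b = 0"
    by simp
  moreover have "0 \<le> ip g (S_vec b) (S_vec b)" "0 \<le> ip g b b"
    using orthogonal_to_unit_timelike_nonneg[OF x_timelike] x_orth_S_vec x_b by blast+
  ultimately have "ip g b b = 0" by linarith
  with orthogonal_to_unit_timelike_null[OF x_timelike x_b] have "\<forall>i<4. b i = 0" by blast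
  then show ?thesis
    unfolding b_def \<alpha>_def \<beta>_def by (simp add: algebra_simps)
qed

lemma commuting_frame_in_plane:
  assumes x': "ip g x' x' = -1" and y': "ip g y' y' = 1" and x'y': "ip g x' y' = 0"
    and commute: "\<forall>u v. ip g u x' * eval2 R y' v - ip g u y' * eval2 R x' v
                        + ip g v x' * eval2 R y' u - ip g v y' * eval2 R x' u = 0"
  shows "\<forall>i<4. x' i = - ip g x x' * x i + ip g y x' * y i"
    and "\<forall>i<4. y' i = - ip g x y' * x i + ip g y y' * y i"
proof -
  have y'x': "ip g y' x' = 0" using x'y' ip_sym by simp
  have R_y'x': "eval2 R y' x' = 0"
    using commute[rule_format, of x' x'] x' x'y' by simp
  define \<mu> where "\<mu> = eval2 R y' y'"
  have eigen_x': "\<forall>w. eval2 R x' w = \<mu> * ip g w x'"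
  proof
    fix w
    show "eval2 R x' w = \<mu> * ip g w x'"
      using commute[rule_format, of y' w] y'x' y' R_y'x' eval2_ricci_sym[of x' y']
      by (simp add: \<mu>_def mult.commute)
  qed
  have eigen_y': "\<forall>w. eval2 R y' w = \<mu> * ip g w y'"
  proof
    fix w
    have "eval2 R x' x' = - \<mu>" using eigen_x' x' by simp
    then show "eval2 R y' w = \<mu> * ip g w y'"
      using commute[rule_format, of x' w] x' x'y' R_y'x' by (simp add: mult.commute)
  qed
  have "\<mu> = - \<kappa>"
  proof (rule ccontr)
    assume "\<mu> \<noteq> - \<kappa>"
    then have "ip g x x' = 0"
      using ricci_eigenvector_orth_frame(1)[OF eigen_x'] by simp
    with x' show False
      using orthogonal_to_unit_timelike_nonneg[OF x_timelike] by fastforce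
  qed
  with eigen_x' eigen_y' show "\<forall>i<4. x' i = - ip g x x' * x i + ip g y x' * y i"
    and "\<forall>i<4. y' i = - ip g x y' * x i + ip g y y' * y i"
    using ricci_eigenvector_in_plane by simp_all
qed

lemma aligned_imp_sym_contraction_zero:
  assumes U': "timelike_volume_form g U' x' y'"
    and aligned: "\<forall>v. in_plane x y v \<longleftrightarrow> in_plane x' y' v"
    and "l < 4" "n < 4"
  shows "sym_contraction g R U' l n = 0 \<and> sym_contraction g R (hodge2 g U') l n = 0"
proof -
  obtain \<alpha> \<beta> where x': "\<forall>i<4. x' i = \<alpha> * x i + \<beta> * y i"
    using aligned in_plane_basis(1)[of x' y'] unfolding in_plane_def by blast
  obtain \<gamma> \<delta> where y': "\<forall>i<4. y' i = \<gamma> * x i + \<delta> * y i"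
    using aligned in_plane_basis(2)[of x' y'] unfolding in_plane_def by blast
  define D where "D = \<alpha> * \<delta> - \<beta> * \<gamma>"
  have U'_eq: "U' a b = D * U a b" if "a < 4" "b < 4" for a b
    using U' volume_form wedge1_lower_basis_change[OF x' y'] that
    by (simp add: timelike_volume_form_def D_def)
  then have "hodge2 g U' a b = D * S a b" for a b
    by (simp add: hodge2_scale hodge_U[symmetric])
  with U'_eq assms(3,4) show ?thesis
    by (simp add: sym_contraction_scale[of U' D U] sym_contraction_scale[of "hodge2 g U'" D S]
        sym_contraction_U sym_contraction_S)
qed

lemma sym_contraction_zero_imp_aligned:
  assumes U': "timelike_volume_form g U' x' y'"
    and zero: "\<forall>l<4. \<forall>n<4. sym_contraction g R U' l n = 0"
  shows "in_plane x y v \<longleftrightarrow> in_plane x' y' v"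
proof -
  interpret U': timelike_plane g U' x' y'
    by (intro timelike_plane.intro spacetime_axioms timelike_plane_axioms.intro U')
  have "\<forall>u v. ip g u x' * eval2 R y' v - ip g u y' * eval2 R x' v
              + ip g v x' * eval2 R y' u - ip g v y' * eval2 R x' u = 0"
    using U'.sym_contraction_zero_imp_commute[OF zero] by blast
  from commuting_frame_in_plane[OF U'.frame(1-3) this]
  have x': "\<forall>i<4. x' i = - ip g x x' * x i + ip g y x' * y i"
    and y': "\<forall>i<4. y' i = - ip g x y' * x i + ip g y y' * y i" .
  define \<alpha> where "\<alpha> = - ip g x x'"
  define \<beta> where "\<beta> = ip g y x'"
  define \<gamma> where "\<gamma> = - ip g x y'"
  define \<delta> where "\<delta> = ip g y y'"
  from x' y' have x'': "\<forall>i<4. x' i = \<alpha> * x i + \<beta> * y i" and y'': "\<forall>i<4. y' i = \<gamma> * x i + \<delta> * y i"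
    by (simp_all add: \<alpha>_def \<beta>_def \<gamma>_def \<delta>_def)
  have ip_x': "ip g x' w = \<alpha> * ip g x w + \<beta> * ip g y w" for w
    using ip_cong_left[of x' "\<lambda>i. \<alpha> * x i + \<beta> * y i" g w] x'' by (simp add: ip_lin_left)
  have ip_y': "ip g y' w = \<gamma> * ip g x w + \<delta> * ip g y w" for w
    using ip_cong_left[of y' "\<lambda>i. \<gamma> * x i + \<delta> * y i" g w] y'' by (simp add: ip_lin_left)
  have "\<alpha> * \<delta> - \<beta> * \<gamma> \<noteq> 0"
    using ip_x'[of x'] ip_y'[of y'] ip_x'[of y'] U'.frame
    by (intro minkowski_orthonormal_det_nonzero) (simp_all add: \<alpha>_def \<beta>_def \<gamma>_def \<delta>_def)
  from in_plane_eq_of_basis_change[OF x'' y'' this] show ?thesis .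
qed

lemma aligned_iff_sym_contraction_zero:
  assumes "timelike_volume_form g U' x' y'"
  shows "(\<forall>v. in_plane x y v \<longleftrightarrow> in_plane x' y' v) \<longleftrightarrow>
    (\<forall>l<4. \<forall>n<4. sym_contraction g R U' l n = 0 \<and> sym_contraction g R (hodge2 g U') l n = 0)"
  using aligned_imp_sym_contraction_zero[OF assms] sym_contraction_zero_imp_aligned[OF assms] by blast

end

section \<open>Petrov type D Weyl tensors\<close>

definition self_dual_bivector :: "tens2 \<Rightarrow> tens2 \<Rightarrow> nat \<Rightarrow> nat \<Rightarrow> complex" where
  "self_dual_bivector g U a b =
     (complex_of_real (U a b) - \<i> * complex_of_real (hodge2 g U a b)) / complex_of_real (sqrt 2)"

lemma complex_of_real_pair_eq_0_iff:
  "(complex_of_real a - \<i> * complex_of_real b) / complex_of_real (sqrt 2) = 0 \<longleftrightarrow> a = 0 \<and> b = 0"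
  by (simp add: complex_eq_iff)

lemma self_dual_bivector_nonzero:
  assumes "timelike_volume_form g U x y"
  shows "\<exists>c<4. \<exists>d<4. self_dual_bivector g U c d \<noteq> 0"
  using timelike_volume_form_nonzero[OF assms]
  by (auto simp: self_dual_bivector_def complex_of_real_pair_eq_0_iff[unfolded divide_eq_0_iff])

lemma sym_contraction_self_dual_bivector:
  "(\<Sum>m\<in>idx. \<Sum>k\<in>idx. complex_of_real (ginv g m k * R k l) * self_dual_bivector g F n m
                     + complex_of_real (ginv g m k * R k n) * self_dual_bivector g F l m)
   = (complex_of_real (sym_contraction g R F l n) - \<i> * complex_of_real (sym_contraction g R (hodge2 g F) l n))
       / complex_of_real (sqrt 2)"
  unfolding self_dual_bivector_def sym_contraction_def
  by (simp add: sum_divide_distrib sum_subtractf sum.distrib sum_distrib_left algebra_simps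
      diff_divide_distrib add_divide_distrib)

lemma typeD_self_dual_weyl:
  assumes "typeD g W \<rho> U' x' y'" and "a < 4" "b < 4" "c < 4" "d < 4"
  shows "sdW g W a b c d = 3 * \<rho> * self_dual_bivector g U' a b * self_dual_bivector g U' c d + \<rho> * calG g a b c d"
  using assms unfolding typeD_def Let_def self_dual_bivector_def by blast

lemma typeD_rho_nonzero:
  assumes "typeD g W \<rho> U' x' y'"
  shows "\<rho> \<noteq> 0"
proof
  assume "\<rho> = 0"
  with typeD_self_dual_weyl[OF assms] have "sdW g W a b c d = 0" if "a < 4" "b < 4" "c < 4" "d < 4" for a b c d
    using that by simp
  then have "inv_a g W = 0"
    unfolding inv_a_def trace4_def comp_def by (simp add: sum.neutral)
  with assms show False
    by (simp add: typeD_def)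
qed

lemma typeD_concomitant_tensor:
  assumes "typeD g W \<rho> U' x' y'" and "a < 4" "b < 4" "c < 4" "d < 4"
  shows "sdW g W a b c d + (inv_b g W / inv_a g W) * calG g a b c d
           = 3 * \<rho> * self_dual_bivector g U' a b * self_dual_bivector g U' c d"
proof -
  from assms(1) have "inv_b g W / inv_a g W = - \<rho>"
    by (simp add: typeD_def)
  with typeD_self_dual_weyl[OF assms] show ?thesis by simp
qed

lemma typeD_concomitant_eq:
  assumes typeD: "typeD g W \<rho> U' x' y'" and "l < 4" "n < 4" "c < 4" "d < 4"
  shows "(\<Sum>m\<in>idx. \<Sum>k\<in>idx.
            complex_of_real (ginv g m k * R k l) * (sdW g W n m c d + (inv_b g W / inv_a g W) * calG g n m c d)
          + complex_of_real (ginv g m k * R k n) * (sdW g W l m c d + (inv_b g W / inv_a g W) * calG g l m c d))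
        = 3 * \<rho> * self_dual_bivector g U' c d *
            ((complex_of_real (sym_contraction g R U' l n)
              - \<i> * complex_of_real (sym_contraction g R (hodge2 g U') l n)) / complex_of_real (sqrt 2))"
proof -
  let ?B = "self_dual_bivector g U'"
  have "(\<Sum>m\<in>idx. \<Sum>k\<in>idx.
            complex_of_real (ginv g m k * R k l) * (sdW g W n m c d + (inv_b g W / inv_a g W) * calG g n m c d)
          + complex_of_real (ginv g m k * R k n) * (sdW g W l m c d + (inv_b g W / inv_a g W) * calG g l m c d))
        = (\<Sum>m\<in>idx. \<Sum>k\<in>idx. 3 * \<rho> * ?B c d *
            (complex_of_real (ginv g m k * R k l) * ?B n m + complex_of_real (ginv g m k * R k n) * ?B l m))"
    using assms(2-)
    by (intro sum.cong refl) (simp only: lessThan_iff typeD_concomitant_tensor[OF typeD], simp add: algebra_simps)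
  then show ?thesis
    by (simp only: sum_distrib_left[symmetric] sym_contraction_self_dual_bivector)
qed

lemma typeD_concomitant_iff:
  assumes typeD: "typeD g W \<rho> U' x' y'"
  shows "(inv_a g W \<noteq> 0 \<and>
     (let P = (\<lambda>a b c d. sdW g W a b c d + (inv_b g W / inv_a g W) * calG g a b c d) in
      \<forall>l<4. \<forall>n<4. \<forall>c<4. \<forall>d<4.
        (\<Sum>m\<in>idx. \<Sum>k\<in>idx. complex_of_real (ginv g m k * R k l) * P n m c d
                           + complex_of_real (ginv g m k * R k n) * P l m c d) = 0))
    \<longleftrightarrow> (\<forall>l<4. \<forall>n<4. sym_contraction g R U' l n = 0 \<and> sym_contraction g R (hodge2 g U') l n = 0)"
proof -
  let ?B = "self_dual_bivector g U'"
  let ?Z = "\<lambda>l n. (complex_of_real (sym_contraction g R U' l n)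
                     - \<i> * complex_of_real (sym_contraction g R (hodge2 g U') l n)) / complex_of_real (sqrt 2)"
  obtain c0 d0 where cd0: "c0 < 4" "d0 < 4" "?B c0 d0 \<noteq> 0"
    using typeD self_dual_bivector_nonzero[of g U' x' y'] by (auto simp: typeD_def)
  have "\<rho> \<noteq> 0"
    using typeD by (rule typeD_rho_nonzero)
  have "(\<forall>l<4. \<forall>n<4. \<forall>c<4. \<forall>d<4. (\<Sum>m\<in>idx. \<Sum>k\<in>idx.
            complex_of_real (ginv g m k * R k l) * (sdW g W n m c d + (inv_b g W / inv_a g W) * calG g n m c d)
          + complex_of_real (ginv g m k * R k n) * (sdW g W l m c d + (inv_b g W / inv_a g W) * calG g l m c d)) = 0)
      \<longleftrightarrow> (\<forall>l<4. \<forall>n<4. \<forall>c<4. \<forall>d<4. 3 * \<rho> * ?B c d * ?Z l n = 0)"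
    by (simp only: typeD_concomitant_eq[OF typeD] cong: imp_cong)
  also have "\<dots> \<longleftrightarrow> (\<forall>l<4. \<forall>n<4. ?Z l n = 0)"
    using cd0 \<open>\<rho> \<noteq> 0\<close> by fastforce
  also have "\<dots> \<longleftrightarrow> (\<forall>l<4. \<forall>n<4. sym_contraction g R U' l n = 0 \<and> sym_contraction g R (hodge2 g U') l n = 0)"
    by (simp only: complex_of_real_pair_eq_0_iff)
  finally show ?thesis
    using typeD unfolding Let_def typeD_def by blast
qed

theorem lemma4:
  fixes g R :: tens2 and W :: "real tens4"
    and \<kappa> :: real and U x y :: "_" and \<rho> :: complex and U' x' y' :: "_"
  assumes "lorentzian g"
    and "\<forall>a<4. \<forall>b<4. R a b = R b a"
    and "weyl_tensor g W"
    and "nonnull_em g R \<kappa> U x y"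
    and "typeD g W \<rho> U' x' y'"
  shows "(\<forall>v. in_plane x y v \<longleftrightarrow> in_plane x' y' v) \<longleftrightarrow>
    (inv_a g W \<noteq> 0 \<and>
     (let P = (\<lambda>a b c d. sdW g W a b c d + (inv_b g W / inv_a g W) * calG g a b c d) in
      \<forall>l<4. \<forall>n<4. \<forall>c<4. \<forall>d<4.
        (\<Sum>m\<in>idx. \<Sum>k\<in>idx. complex_of_real (ginv g m k * R k l) * P n m c d
                           + complex_of_real (ginv g m k * R k n) * P l m c d) = 0))"
proof -
  interpret nonnull_em_field g R \<kappa> U x y
    using assms(1,4) by (intro nonnull_em_field.intro spacetime.intro nonnull_em_field_axioms.intro)
  have "timelike_volume_form g U' x' y'"
    using assms(5) by (simp add: typeD_def)
  then show ?thesis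
    by (simp only: aligned_iff_sym_contraction_zero typeD_concomitant_iff[OF assms(5)])
qed

end
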